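(* Let $\mathbf{s}$ be an automatic sequence for which there is a constant $c$ such that every prefix of $\mathbf{s}$ has a string attractor of size at most $c$. Then the functions $f(n):=\mathrm{maxspan}(\mathbf{s}[0..n-1])$ and $g(n):=\mathrm{minspan}(\mathbf{s}[0..n-1])$ are synchronized: there is a finite automaton recognizing the (parallel, padded) representations of the pairs $(n,f(n))$, and one recognizing the representations of the pairs $(n,g(n))$, in the numeration system of $\mathbf{s}$.
   Context: A numeration system represents each natural number uniquely as a word over a finite alphabet; it is regular if the set of representations is regular and the relation $z=x+y$ is recognizable by a finite automaton reading representations in parallel. A sequence $\mathbf{s}=(s_n)_{n\ge0}$ is automatic if there is a regular numeration system and a finite automaton that on input the representation of $n$ outputs $s_n$. A string attractor of a finite word $w=w[0..n-1]$ is a set $S\subseteq\{0,\ldots,n-1\}$ such that every nonempty factor of $w$ has an occurrence $w[p..q]$ with $p\le i\le q$ for some $i\in S$. The span of a finite set $S=\{i_1<\cdots<i_k\}$ is $i_k-i_1$. For a finite word $x$, $\mathrm{maxspan}(x)$ and $\mathrm{minspan}(x)$ are the maximum and minimum span among all string attractors of $x$ of minimum cardinality. *)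

theory Defs
  imports Main
begin

definition regular_lang :: "'a list set \<Rightarrow> bool" where
  "regular_lang L \<longleftrightarrow>
     (\<exists>(Q::nat set) q0 (\<delta>::nat \<Rightarrow> 'a \<Rightarrow> nat) F.
        finite Q \<and> q0 \<in> Q \<and> (\<forall>q\<in>Q. \<forall>a. \<delta> q a \<in> Q) \<and> F \<subseteq> Q \<and>
        L = {w. foldl \<delta> q0 w \<in> F})"

text \<open>Words are read most significant digit first; shorter words are padded on the left
with a padding symbol (None) up to the common length.\<close>

definition padl :: "nat \<Rightarrow> 'd list \<Rightarrow> 'd option list" where
  "padl m u = replicate (m - length u) None @ map Some u"

definition pair_word :: "'d list \<Rightarrow> 'd list \<Rightarrow> ('d option \<times> 'd option) list" where
  "pair_word u v = (let m = max (length u) (length v) in zip (padl m u) (padl m v))"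

definition triple_word ::
  "'d list \<Rightarrow> 'd list \<Rightarrow> 'd list \<Rightarrow> ('d option \<times> 'd option \<times> 'd option) list" where
  "triple_word u v w = (let m = max (length u) (max (length v) (length w)) in
      zip (padl m u) (zip (padl m v) (padl m w)))"

text \<open>A numeration system over the finite digit alphabet 'd is a map rep assigning to every
natural number its (unique) representation; uniqueness = injectivity.\<close>

definition regular_numeration :: "(nat \<Rightarrow> 'd::finite list) \<Rightarrow> bool" where
  "regular_numeration rep \<longleftrightarrow>
     inj rep \<and> regular_lang (range rep) \<and>
     regular_lang {triple_word (rep x) (rep y) (rep z) | x y z. z = x + y}"

definition automatic_wrt :: "(nat \<Rightarrow> 'd::finite list) \<Rightarrow> (nat \<Rightarrow> 'b) \<Rightarrow> bool" where
  "automatic_wrt rep s \<longleftrightarrow>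
     (\<exists>(Q::nat set) q0 (\<delta>::nat \<Rightarrow> 'd \<Rightarrow> nat) (\<tau>::nat \<Rightarrow> 'b).
        finite Q \<and> q0 \<in> Q \<and> (\<forall>q\<in>Q. \<forall>a. \<delta> q a \<in> Q) \<and>
        (\<forall>n. s n = \<tau> (foldl \<delta> q0 (rep n))))"

definition synchronized :: "(nat \<Rightarrow> 'd::finite list) \<Rightarrow> (nat \<Rightarrow> nat) \<Rightarrow> bool" where
  "synchronized rep f \<longleftrightarrow> regular_lang {pair_word (rep n) (rep (f n)) | n. True}"

definition string_attractor :: "'b list \<Rightarrow> nat set \<Rightarrow> bool" where
  "string_attractor w S \<longleftrightarrow> S \<subseteq> {..<length w} \<and>
     (\<forall>i l. 0 < l \<and> i + l \<le> length w \<longrightarrow>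
        (\<exists>p k. k \<in> S \<and> p \<le> k \<and> k < p + l \<and> p + l \<le> length w \<and>
               take l (drop p w) = take l (drop i w)))"

definition gamma :: "'b list \<Rightarrow> nat" where
  "gamma w = (LEAST c. \<exists>S. string_attractor w S \<and> card S = c)"

definition span :: "nat set \<Rightarrow> nat" where
  "span S = (if S = {} then 0 else Max S - Min S)"

definition maxspan :: "'b list \<Rightarrow> nat" where
  "maxspan w = Max {span S | S. string_attractor w S \<and> card S = gamma w}"

definition minspan :: "'b list \<Rightarrow> nat" where
  "minspan w = Min {span S | S. string_attractor w S \<and> card S = gamma w}"

definition prefix_of_seq :: "(nat \<Rightarrow> 'b) \<Rightarrow> nat \<Rightarrow> 'b list" where
  "prefix_of_seq s n = map s [0..<n]"

end

theory Submission
  imports Defs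
begin

text \<open>Call a relation on tuples of natural numbers regular if the parallel, left-padded
  representations of its tuples form a regular language. Regular relations include addition and,
  for an automatic \<open>s\<close>, the relations \<open>s x = b\<close>; they are closed under Boolean operations,
  under permuting and identifying coordinates, and under existential quantification (projection).
  Hence every relation first-order definable from them is regular.

  If all prefixes have attractors of size at most \<open>c\<close>, then \<open>\<gamma>(s[0..n-1]) \<le> c\<close>, so
  "\<open>m\<close> is the span of a minimum attractor of \<open>s[0..n-1]\<close>" becomes the finite disjunction over
  \<open>j \<le> c\<close> of "\<open>\<gamma> = j\<close> and some \<open>j\<close> distinct positions form an attractor of span \<open>m\<close>", where
  being an attractor is a first-order property of the positions and \<open>n\<close>. Then \<open>m = maxspan\<close> says
  that \<open>m\<close> is such a span and no such span exceeds \<open>m\<close> (dually for \<open>minspan\<close>), so the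
  graphs of both functions are regular relations, i.e. the functions are synchronized.\<close>

section \<open>Closure properties of regular languages\<close>

lemma foldl_closed:
  assumes "\<forall>q\<in>Q. \<forall>a. \<delta> q a \<in> Q" "q \<in> Q"
  shows "foldl \<delta> q w \<in> Q"
  using assms(2) by (induction w arbitrary: q) (auto simp: assms(1))

text \<open>The definition of \<^const>\<open>regular_lang\<close> insists on states in \<^typ>\<open>nat\<close>; this
  introduction rule allows automata over an arbitrary state type.\<close>

lemma regular_langI:
  fixes \<delta> :: "'q \<Rightarrow> 'a \<Rightarrow> 'q"
  assumes fin: "finite Q" and q0: "q0 \<in> Q" and closed: "\<forall>q\<in>Q. \<forall>a. \<delta> q a \<in> Q"
  shows "regular_lang {w. foldl \<delta> q0 w \<in> F}"
proof -
  obtain f :: "'q \<Rightarrow> nat" and n where "f ` Q = {i. i < n}" and inj: "inj_on f Q"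
    using finite_imp_inj_to_nat_seg[OF fin] by blast
  define \<delta>' where "\<delta>' i a = f (\<delta> (inv_into Q f i) a)" for i a
  have inv: "inv_into Q f (f q) = q" if "q \<in> Q" for q
    using inj that by simp
  have simulate: "foldl \<delta>' (f q) w = f (foldl \<delta> q w)" if "q \<in> Q" for q w
    using that by (induction w arbitrary: q) (simp_all add: \<delta>'_def inv closed)
  have "foldl \<delta>' (f q0) w \<in> f ` (F \<inter> Q) \<longleftrightarrow> foldl \<delta> q0 w \<in> F" for w
    using simulate[OF q0] foldl_closed[OF closed q0, of w] inj by (auto simp: inj_on_def)
  then have "{w. foldl \<delta> q0 w \<in> F} = {w. foldl \<delta>' (f q0) w \<in> f ` (F \<inter> Q)}"
    by auto
  moreover have "\<forall>q\<in>f ` Q. \<forall>a. \<delta>' q a \<in> f ` Q"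
    using closed by (auto simp: \<delta>'_def inv)
  ultimately show ?thesis
    unfolding regular_lang_def using fin q0
    by (intro exI[of _ "f ` Q"] exI[of _ "f q0"] exI[of _ \<delta>'] exI[of _ "f ` (F \<inter> Q)"]) auto
qed

lemma regular_langE:
  assumes "regular_lang L"
  obtains Q q0 and \<delta> :: "nat \<Rightarrow> 'a \<Rightarrow> nat" and F
  where "finite Q" "q0 \<in> Q" "\<forall>q\<in>Q. \<forall>a. \<delta> q a \<in> Q" "L = {w. foldl \<delta> q0 w \<in> F}"
  using assms unfolding regular_lang_def by blast

lemma regular_lang_Compl: "regular_lang L \<Longrightarrow> regular_lang (- L)"
proof (elim regular_langE)
  fix Q q0 F and \<delta> :: "nat \<Rightarrow> 'a \<Rightarrow> nat"
  assume "finite Q" "q0 \<in> Q" "\<forall>q\<in>Q. \<forall>a. \<delta> q a \<in> Q" "L = {w. foldl \<delta> q0 w \<in> F}"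
  moreover from this have "- L = {w. foldl \<delta> q0 w \<in> - F}" by auto
  ultimately show ?thesis using regular_langI by metis
qed

lemma foldl_pair:
  "foldl (\<lambda>(p, q) a. (\<delta>1 p a, \<delta>2 q a)) (p, q) w = (foldl \<delta>1 p w, foldl \<delta>2 q w)"
  by (induction w arbitrary: p q) auto

lemma regular_lang_Int:
  assumes "regular_lang L1" "regular_lang L2"
  shows "regular_lang (L1 \<inter> L2)"
proof -
  obtain Q1 q1 F1 and \<delta>1 :: "nat \<Rightarrow> 'a \<Rightarrow> nat"
    where A: "finite Q1" "q1 \<in> Q1" "\<forall>q\<in>Q1. \<forall>a. \<delta>1 q a \<in> Q1" "L1 = {w. foldl \<delta>1 q1 w \<in> F1}"
    using assms(1) by (rule regular_langE)
  obtain Q2 q2 F2 and \<delta>2 :: "nat \<Rightarrow> 'a \<Rightarrow> nat"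
    where B: "finite Q2" "q2 \<in> Q2" "\<forall>q\<in>Q2. \<forall>a. \<delta>2 q a \<in> Q2" "L2 = {w. foldl \<delta>2 q2 w \<in> F2}"
    using assms(2) by (rule regular_langE)
  have "regular_lang {w. foldl (\<lambda>(p, q) a. (\<delta>1 p a, \<delta>2 q a)) (q1, q2) w \<in> F1 \<times> F2}"
    by (rule regular_langI[of "Q1 \<times> Q2"]) (use A B in auto)
  then show ?thesis
    unfolding foldl_pair A(4) B(4) by (simp add: Collect_conj_eq)
qed

lemma regular_lang_Diff: "regular_lang L1 \<Longrightarrow> regular_lang L2 \<Longrightarrow> regular_lang (L1 - L2)"
  by (simp add: Diff_eq regular_lang_Compl regular_lang_Int)

lemma regular_lang_lists: "regular_lang (lists A)"
proof -
  have "foldl (\<lambda>q a. q \<and> a \<in> A) q w \<longleftrightarrow> q \<and> w \<in> lists A" for q w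
    by (induction w arbitrary: q) auto
  then show ?thesis
    using regular_langI[of UNIV True "\<lambda>q a. q \<and> a \<in> A" "{True}"] by simp
qed

lemma regular_lang_empty: "regular_lang {}"
  using regular_lang_lists[of "{}"] regular_lang_Diff[of "lists {}" "lists {}"] by simp

lemma regular_lang_UNIV: "regular_lang UNIV"
  using regular_lang_lists[of UNIV] by simp

lemma regular_lang_vimage_map:
  assumes "regular_lang L"
  shows "regular_lang {w. map h w \<in> L}"
proof -
  obtain Q q0 F and \<delta> :: "nat \<Rightarrow> 'a \<Rightarrow> nat"
    where A: "finite Q" "q0 \<in> Q" "\<forall>q\<in>Q. \<forall>a. \<delta> q a \<in> Q" "L = {w. foldl \<delta> q0 w \<in> F}"
    using assms by (rule regular_langE)
  have "regular_lang {w. foldl (\<lambda>q b. \<delta> q (h b)) q0 w \<in> F}"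
    by (rule regular_langI[of Q]) (use A in auto)
  then show ?thesis
    unfolding A(4) by (simp add: foldl_map)
qed

text \<open>Subset construction: after reading \<open>v\<close>, the automaton for \<open>map h ` L\<close> is in the set of
  all states reachable by words \<open>w\<close> with \<open>map h w = v\<close>.\<close>

lemma regular_lang_image_map:
  assumes "regular_lang L"
  shows "regular_lang (map h ` L)"
proof -
  obtain Q q0 F and \<delta> :: "nat \<Rightarrow> 'a \<Rightarrow> nat"
    where A: "finite Q" "q0 \<in> Q" "\<forall>q\<in>Q. \<forall>a. \<delta> q a \<in> Q" "L = {w. foldl \<delta> q0 w \<in> F}"
    using assms by (rule regular_langE)
  define \<delta>' where "\<delta>' P b = {\<delta> q a | q a. q \<in> P \<and> h a = b}" for P b
  have reach: "foldl \<delta>' P v = {foldl \<delta> q w | q w. q \<in> P \<and> map h w = v}" for P v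
  proof (induction v arbitrary: P)
    case (Cons b v)
    have "foldl \<delta>' P (b # v) = {foldl \<delta> q w | q w. q \<in> \<delta>' P b \<and> map h w = v}"
      using Cons.IH by simp
    also have "\<dots> = {foldl \<delta> q w | q w. q \<in> P \<and> map h w = b # v}"
    proof (intro set_eqI iffI)
      fix x
      assume "x \<in> {foldl \<delta> q w | q w. q \<in> \<delta>' P b \<and> map h w = v}"
      then obtain q a w where "x = foldl \<delta> (\<delta> q a) w" "q \<in> P" "h a = b" "map h w = v"
        unfolding \<delta>'_def by blast
      then show "x \<in> {foldl \<delta> q w | q w. q \<in> P \<and> map h w = b # v}"
        by (intro CollectI exI[of _ q] exI[of _ "a # w"]) auto
    next
      fix x
      assume "x \<in> {foldl \<delta> q w | q w. q \<in> P \<and> map h w = b # v}"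
      then obtain q a w where "x = foldl \<delta> q (a # w)" "q \<in> P" "h a = b" "map h w = v"
        by (auto simp: Cons_eq_map_conv)
      then show "x \<in> {foldl \<delta> q w | q w. q \<in> \<delta>' P b \<and> map h w = v}"
        unfolding \<delta>'_def by auto
    qed
    finally show ?case .
  qed auto
  have "regular_lang {v. foldl \<delta>' {q0} v \<in> {P. P \<inter> F \<noteq> {}}}"
    by (rule regular_langI[of "Pow Q"]) (use A in \<open>auto simp: \<delta>'_def\<close>)
  moreover have "{v. foldl \<delta>' {q0} v \<in> {P. P \<inter> F \<noteq> {}}} = map h ` L"
    unfolding reach A(4) by blast
  ultimately show ?thesis by simp
qed

lemma regular_lang_replicate_quotient:
  assumes "regular_lang L"
  shows "regular_lang {v. \<exists>a. replicate a z @ v \<in> L}"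
proof -
  obtain Q q0 F and \<delta> :: "nat \<Rightarrow> 'a \<Rightarrow> nat"
    where A: "finite Q" "q0 \<in> Q" "\<forall>q\<in>Q. \<forall>a. \<delta> q a \<in> Q" "L = {w. foldl \<delta> q0 w \<in> F}"
    using assms by (rule regular_langE)
  define \<delta>' where "\<delta>' P b = (\<lambda>q. \<delta> q b) ` P" for P b
  have run: "foldl \<delta>' P v = (\<lambda>q. foldl \<delta> q v) ` P" for P v
    by (induction v arbitrary: P) (auto simp: \<delta>'_def image_image)
  define P0 where "P0 = range (\<lambda>a. foldl \<delta> q0 (replicate a z))"
  have "P0 \<subseteq> Q"
    unfolding P0_def using foldl_closed[OF A(3,2)] by auto
  then have "regular_lang {v. foldl \<delta>' P0 v \<in> {P. P \<inter> F \<noteq> {}}}"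
    by (intro regular_langI[of "Pow Q"]) (use A in \<open>auto simp: \<delta>'_def\<close>)
  moreover have "{v. foldl \<delta>' P0 v \<in> {P. P \<inter> F \<noteq> {}}} = {v. \<exists>a. replicate a z @ v \<in> L}"
    unfolding run A(4) P0_def by auto
  ultimately show ?thesis by simp
qed

lemma replicate_append_dropWhile:
  "w = replicate (length (takeWhile (\<lambda>x. x = z) w)) z @ dropWhile (\<lambda>x. x = z) w"
  by (induction w) auto

lemma mem_replicate_prefix_iff:
  assumes "\<forall>v\<in>L. v = [] \<or> hd v \<noteq> z"
  shows "w \<in> {replicate a z @ v | a v. v \<in> L} \<longleftrightarrow> dropWhile (\<lambda>x. x = z) w \<in> L"
proof
  assume "w \<in> {replicate a z @ v | a v. v \<in> L}"
  then obtain a v where v: "w = replicate a z @ v" "v \<in> L"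
    by blast
  have "dropWhile (\<lambda>x. x = z) (replicate a z @ v) = dropWhile (\<lambda>x. x = z) v"
    by (induction a) auto
  also have "\<dots> = v"
    using assms v(2) by (cases v) auto
  finally show "dropWhile (\<lambda>x. x = z) w \<in> L"
    using v by simp
next
  assume "dropWhile (\<lambda>x. x = z) w \<in> L"
  then show "w \<in> {replicate a z @ v | a v. v \<in> L}"
    using replicate_append_dropWhile[of w z] by blast
qed

text \<open>The automaton skips the leading \<open>z\<close>'s (state \<^const>\<open>None\<close>) and then runs the automaton
  of \<open>L\<close>; this is correct because no nonempty word of \<open>L\<close> starts with \<open>z\<close>.\<close>

lemma regular_lang_replicate_prefix:
  assumes "regular_lang L" "\<forall>v\<in>L. v = [] \<or> hd v \<noteq> z"
  shows "regular_lang {replicate a z @ v | a v. v \<in> L}"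
proof -
  obtain Q q0 F and \<delta> :: "nat \<Rightarrow> 'a \<Rightarrow> nat"
    where A: "finite Q" "q0 \<in> Q" "\<forall>q\<in>Q. \<forall>a. \<delta> q a \<in> Q" "L = {w. foldl \<delta> q0 w \<in> F}"
    using assms(1) by (rule regular_langE)
  define \<delta>' where "\<delta>' x b = (case x of
      None \<Rightarrow> if b = z then None else Some (\<delta> q0 b)
    | Some q \<Rightarrow> Some (\<delta> q b))" for x b
  define F' where "F' = Some ` F \<union> (if q0 \<in> F then {None} else {})"
  have skip: "foldl \<delta>' None w = foldl \<delta>' None (dropWhile (\<lambda>x. x = z) w)" for w
    by (induction w) (auto simp: \<delta>'_def)
  have run: "foldl \<delta>' (Some q) v = Some (foldl \<delta> q v)" for q v
    by (induction v arbitrary: q) (auto simp: \<delta>'_def)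
  have accept: "foldl \<delta>' None v \<in> F' \<longleftrightarrow> v \<in> L" if "v = [] \<or> hd v \<noteq> z" for v
    using that by (cases v) (auto simp: \<delta>'_def run F'_def A(4))
  have "foldl \<delta>' None w \<in> F' \<longleftrightarrow> w \<in> {replicate a z @ v | a v. v \<in> L}" for w
    unfolding skip[of w] mem_replicate_prefix_iff[OF assms(2)]
    using accept hd_dropWhile[of "\<lambda>x. x = z" w] by blast
  moreover have "regular_lang {w. foldl \<delta>' None w \<in> F'}"
    by (rule regular_langI[of "insert None (Some ` Q)"])
      (use A in \<open>auto simp: \<delta>'_def split: option.splits\<close>)
  ultimately show ?thesis by simp
qed

lemma regular_lang_hd_neq: "regular_lang {w. w = [] \<or> hd w \<noteq> z}"
proof -
  define \<delta> where "\<delta> q c = (if q = (0::nat) then if c = z then 2 else 1 else q)" for q c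
  have stuck: "q \<noteq> 0 \<Longrightarrow> foldl \<delta> q w = q" for q w
    by (induction w) (auto simp: \<delta>_def)
  have "foldl \<delta> 0 w \<in> {0, 1} \<longleftrightarrow> w = [] \<or> hd w \<noteq> z" for w
    by (cases w) (auto simp: \<delta>_def stuck)
  moreover have "regular_lang {w. foldl \<delta> 0 w \<in> {0, 1}}"
    by (rule regular_langI[of "{0, 1, 2}"]) (auto simp: \<delta>_def)
  ultimately show ?thesis by simp
qed

section \<open>Reading several padded representations in parallel\<close>

definition track :: "nat \<Rightarrow> 'a list list \<Rightarrow> 'a list" where
  "track j w = map (\<lambda>c. c ! j) w"

lemma track_append: "track j (u @ v) = track j u @ track j v"
  by (simp add: track_def)

lemma track_replicate: "j < k \<Longrightarrow> track j (replicate a (replicate k x)) = replicate a x"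
  by (simp add: track_def)

lemma track_ext:
  assumes "length w = length w'" "w \<in> lists {c. length c = k}" "w' \<in> lists {c. length c = k}"
    and "\<forall>j<k. track j w = track j w'"
  shows "w = w'"
proof (rule nth_equalityI)
  fix i
  assume i: "i < length w"
  show "w ! i = w' ! i"
  proof (rule nth_equalityI)
    show "length (w ! i) = length (w' ! i)"
      using assms(1-3) i by (auto simp: in_lists_conv_set)
    fix j
    assume "j < length (w ! i)"
    then have "j < k"
      using assms(2) i by (auto simp: in_lists_conv_set)
    then have "track j w ! i = track j w' ! i"
      using assms(4) by simp
    then show "w ! i ! j = w' ! i ! j"
      using i assms(1) by (simp add: track_def)
  qed
qed (rule assms(1))

lemma length_padl [simp]: "length u \<le> m \<Longrightarrow> length (padl m u) = m"
  by (simp add: padl_def)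

lemma padl_inj: "inj (padl m)"
proof (rule injI)
  have "map the (filter (\<lambda>x. x \<noteq> None) (padl m u)) = u" for u :: "'a list"
    by (simp add: padl_def filter_map comp_def)
  then show "padl m u = padl m v \<Longrightarrow> u = v" for u v :: "'a list"
    by metis
qed

lemma replicate_None_append_padl:
  "length u \<le> m \<Longrightarrow> replicate a None @ padl m u = padl (a + m) u"
  by (simp add: padl_def replicate_add[symmetric])

lemma length_filter_padl: "length (filter (\<lambda>x. x \<noteq> None) (padl m u)) = length u"
  by (simp add: padl_def filter_map comp_def)

lemma nth0_padl_neq_None: "length u = m \<Longrightarrow> 0 < m \<Longrightarrow> padl m u ! 0 \<noteq> None"
  by (cases u) (auto simp: padl_def)

text \<open>A tuple \<open>xs\<close> of \<open>k\<close> numbers is encoded, at any width \<open>m\<close> that \<open>fits\<close> all its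
  representations, as the word of \<open>m\<close> columns of length \<open>k\<close> whose \<open>j\<close>-th track is the
  representation of \<open>xs ! j\<close> left-padded to length \<open>m\<close>.\<close>

locale numeration =
  fixes rep :: "nat \<Rightarrow> 'd::finite list"
  assumes inj_rep: "inj rep"
    and regular_range: "regular_lang (range rep)"
    and regular_addition: "regular_lang {triple_word (rep x) (rep y) (rep z) | x y z. z = x + y}"
begin

definition enc :: "nat \<Rightarrow> nat list \<Rightarrow> 'd option list list" where
  "enc m xs = map (\<lambda>i. map (\<lambda>x. padl m (rep x) ! i) xs) [0..<m]"

definition fits :: "nat \<Rightarrow> nat list \<Rightarrow> bool" where
  "fits m xs \<longleftrightarrow> (\<forall>x\<in>set xs. length (rep x) \<le> m)"

definition rel_lang :: "nat \<Rightarrow> (nat list \<Rightarrow> bool) \<Rightarrow> 'd option list list set" where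
  "rel_lang k P = {enc m xs | m xs. length xs = k \<and> fits m xs \<and> P xs}"

definition regular_rel :: "nat \<Rightarrow> (nat list \<Rightarrow> bool) \<Rightarrow> bool" where
  "regular_rel k P \<longleftrightarrow> regular_lang (rel_lang k P)"

lemma length_enc [simp]: "length (enc m xs) = m"
  by (simp add: enc_def)

lemma enc_in_lists: "enc m xs \<in> lists {c. length c = length xs}"
  by (auto simp: enc_def)

lemma nth_enc: "i < m \<Longrightarrow> enc m xs ! i = map (\<lambda>x. padl m (rep x) ! i) xs"
  by (simp add: enc_def)

lemma track_enc: "j < length xs \<Longrightarrow> fits m xs \<Longrightarrow> track j (enc m xs) = padl m (rep (xs ! j))"
  by (intro nth_equalityI) (auto simp: track_def nth_enc fits_def)

lemma enc_inject:
  assumes "enc m xs = enc m' ys" "length xs = length ys" "fits m xs" "fits m' ys"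
  shows "m = m' \<and> xs = ys"
proof -
  have m: "m = m'"
    using arg_cong[OF assms(1), of length] by simp
  have "xs = ys"
  proof (rule nth_equalityI)
    fix j
    assume j: "j < length xs"
    have "padl m (rep (xs ! j)) = padl m (rep (ys ! j))"
      using track_enc[OF j assms(3)] track_enc[of j ys m'] j assms m by simp
    then show "xs ! j = ys ! j"
      using inj_rep padl_inj by (metis injD)
  qed (rule assms(2))
  with m show ?thesis by simp
qed

lemma enc_in_rel_lang_iff:
  assumes "fits m xs" "length xs = k"
  shows "enc m xs \<in> rel_lang k P \<longleftrightarrow> P xs"
proof
  assume "enc m xs \<in> rel_lang k P"
  then obtain m' ys where "enc m xs = enc m' ys" "length ys = k" "fits m' ys" "P ys"
    unfolding rel_lang_def by blast
  then show "P xs"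
    using enc_inject assms by metis
qed (use assms in \<open>auto simp: rel_lang_def\<close>)

lemma rel_langE:
  assumes "w \<in> rel_lang k P"
  obtains m xs where "w = enc m xs" "length xs = k" "fits m xs" "P xs"
  using assms unfolding rel_lang_def by blast

lemma rel_lang_subset: "rel_lang k P \<subseteq> rel_lang k (\<lambda>_. True)"
  unfolding rel_lang_def by blast

lemma rel_lang_eqI:
  assumes "\<And>m xs. length xs = k \<Longrightarrow> fits m xs \<Longrightarrow> enc m xs \<in> A \<longleftrightarrow> P xs"
    and "A \<subseteq> rel_lang k (\<lambda>_. True)"
  shows "rel_lang k P = A"
proof (intro set_eqI iffI)
  fix w
  assume "w \<in> rel_lang k P"
  then show "w \<in> A"
    using assms(1) by (auto elim!: rel_langE)
next
  fix w
  assume "w \<in> A"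
  then obtain m xs where "w = enc m xs" "length xs = k" "fits m xs"
    using assms(2) by (blast elim: rel_langE)
  then show "w \<in> rel_lang k P"
    using assms(1) \<open>w \<in> A\<close> enc_in_rel_lang_iff by blast
qed

lemma regular_rel_cong:
  assumes "regular_rel k P" "\<And>xs. length xs = k \<Longrightarrow> P xs = Q xs"
  shows "regular_rel k Q"
proof -
  have "rel_lang k P = rel_lang k Q"
    unfolding rel_lang_def using assms(2) by blast
  then show ?thesis
    using assms(1) unfolding regular_rel_def by simp
qed

definition padded_reps :: "'d option list set" where
  "padded_reps = {replicate a None @ v | a v. v \<in> map Some ` range rep}"

lemma regular_padded_reps: "regular_lang padded_reps"
  unfolding padded_reps_def
  by (rule regular_lang_replicate_prefix) (auto intro: regular_lang_image_map regular_range simp: hd_map)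

lemma padl_rep_in_padded_reps: "length (rep x) \<le> m \<Longrightarrow> padl m (rep x) \<in> padded_reps"
  unfolding padded_reps_def padl_def by blast

lemma padded_repsE:
  assumes "v \<in> padded_reps"
  obtains x where "length (rep x) \<le> length v" "v = padl (length v) (rep x)"
proof -
  obtain a x where "v = replicate a None @ map Some (rep x)"
    using assms unfolding padded_reps_def by blast
  then show ?thesis
    using that[of x] by (simp add: padl_def)
qed

lemma regular_lang_padded_tracks: "regular_lang {w. \<forall>j<k. track j w \<in> padded_reps}"
proof (induction k)
  case 0
  then show ?case using regular_lang_UNIV by simp
next
  case (Suc k)
  have "{w. \<forall>j<Suc k. track j w \<in> padded_reps}
      = {w. \<forall>j<k. track j w \<in> padded_reps} \<inter> {w. map (\<lambda>c. c ! k) w \<in> padded_reps}"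
    by (auto simp: track_def less_Suc_eq)
  then show ?case
    using regular_lang_Int[OF Suc regular_lang_vimage_map[OF regular_padded_reps]] by simp
qed

lemma rel_lang_True:
  "rel_lang k (\<lambda>_. True) = lists {c. length c = k} \<inter> {w. \<forall>j<k. track j w \<in> padded_reps}"
proof (intro set_eqI iffI)
  fix w
  assume "w \<in> rel_lang k (\<lambda>_. True)"
  then obtain m xs where "w = enc m xs" "length xs = k" "fits m xs"
    by (auto elim: rel_langE)
  then show "w \<in> lists {c. length c = k} \<inter> {w. \<forall>j<k. track j w \<in> padded_reps}"
    using enc_in_lists track_enc padl_rep_in_padded_reps by (auto simp: fits_def)
next
  fix w
  assume w: "w \<in> lists {c. length c = k} \<inter> {w. \<forall>j<k. track j w \<in> padded_reps}"
  have "\<forall>j<k. \<exists>x. length (rep x) \<le> length w \<and> track j w = padl (length w) (rep x)"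
    using w by (metis (no_types, lifting) IntD2 length_map mem_Collect_eq padded_repsE track_def)
  then obtain f where f: "\<forall>j<k. length (rep (f j)) \<le> length w \<and> track j w = padl (length w) (rep (f j))"
    by metis
  define xs where "xs = map f [0..<k]"
  have fits: "fits (length w) xs"
    using f by (auto simp: fits_def xs_def)
  have "w = enc (length w) xs"
    by (rule track_ext[of _ _ k]) (use w f fits enc_in_lists[of _ xs] in \<open>auto simp: xs_def track_enc\<close>)
  with fits show "w \<in> rel_lang k (\<lambda>_. True)"
    unfolding rel_lang_def by (intro CollectI exI[of _ "length w"] exI[of _ xs]) (simp add: xs_def)
qed

lemma regular_rel_True: "regular_rel k (\<lambda>_. True)"
  unfolding regular_rel_def rel_lang_True
  by (intro regular_lang_Int regular_lang_lists regular_lang_padded_tracks)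

lemma regular_rel_False: "regular_rel k (\<lambda>_. False)"
  using regular_lang_empty by (simp add: regular_rel_def rel_lang_def)

lemma regular_rel_Not: "regular_rel k P \<Longrightarrow> regular_rel k (\<lambda>xs. \<not> P xs)"
proof -
  assume "regular_rel k P"
  moreover have "rel_lang k (\<lambda>xs. \<not> P xs) = rel_lang k (\<lambda>_. True) - rel_lang k P"
    by (rule rel_lang_eqI) (auto simp: enc_in_rel_lang_iff)
  ultimately show ?thesis
    using regular_lang_Diff regular_rel_True unfolding regular_rel_def by metis
qed

lemma regular_rel_conj: "regular_rel k P \<Longrightarrow> regular_rel k Q \<Longrightarrow> regular_rel k (\<lambda>xs. P xs \<and> Q xs)"
proof -
  assume "regular_rel k P" "regular_rel k Q"
  moreover have "rel_lang k (\<lambda>xs. P xs \<and> Q xs) = rel_lang k P \<inter> rel_lang k Q"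
    by (rule rel_lang_eqI) (use rel_lang_subset in \<open>auto simp: enc_in_rel_lang_iff\<close>)
  ultimately show ?thesis
    using regular_lang_Int unfolding regular_rel_def by metis
qed

lemma regular_rel_disj: "regular_rel k P \<Longrightarrow> regular_rel k Q \<Longrightarrow> regular_rel k (\<lambda>xs. P xs \<or> Q xs)"
  using regular_rel_Not[of k "\<lambda>xs. \<not> P xs \<and> \<not> Q xs"] regular_rel_conj[OF regular_rel_Not regular_rel_Not]
  by simp

lemma regular_rel_imp: "regular_rel k P \<Longrightarrow> regular_rel k Q \<Longrightarrow> regular_rel k (\<lambda>xs. P xs \<longrightarrow> Q xs)"
  using regular_rel_disj[OF regular_rel_Not] by simp

lemma regular_rel_bex_finite:
  assumes "finite A" "\<forall>a\<in>A. regular_rel k (P a)"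
  shows "regular_rel k (\<lambda>xs. \<exists>a\<in>A. P a xs)"
  using assms
proof (induction A rule: finite_induct)
  case empty
  then show ?case using regular_rel_False by simp
next
  case (insert a A)
  then have "regular_rel k (\<lambda>xs. P a xs \<or> (\<exists>a\<in>A. P a xs))"
    by (intro regular_rel_disj) auto
  then show ?case by simp
qed

lemma regular_rel_ball_finite:
  assumes "finite A" "\<forall>a\<in>A. regular_rel k (P a)"
  shows "regular_rel k (\<lambda>xs. \<forall>a\<in>A. P a xs)"
  using regular_rel_Not[OF regular_rel_bex_finite[of A k "\<lambda>a xs. \<not> P a xs"]] assms
  by (simp add: regular_rel_Not)

lemma replicate_append_enc:
  assumes "length xs = k" "fits m xs"
  shows "replicate a (replicate k None) @ enc m xs = enc (a + m) xs"
proof (rule track_ext[of _ _ k])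
  have "fits (a + m) xs"
    using assms(2) by (auto simp: fits_def)
  then show "\<forall>j<k. track j (replicate a (replicate k None) @ enc m xs) = track j (enc (a + m) xs)"
    using assms
    by (auto simp: track_append track_replicate track_enc replicate_None_append_padl fits_def)
qed (use assms enc_in_lists in auto)

lemma replicate_append_eq_encD:
  assumes "replicate a (replicate k None) @ v = enc m xs" "length xs = k" "fits m xs"
  shows "fits (length v) xs \<and> v = enc (length v) xs"
proof -
  have m: "m = a + length v"
    using arg_cong[OF assms(1), of length] by simp
  have track_v: "replicate a None @ track j v = padl m (rep (xs ! j))" if "j < k" for j
    using arg_cong[OF assms(1), of "track j"] that assms(2,3)
    by (simp add: track_append track_replicate track_enc)
  have fits: "fits (length v) xs"
    unfolding fits_def
  proof
    fix x
    assume "x \<in> set xs"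
    then obtain j where j: "j < k" "x = xs ! j"
      using assms(2) by (metis in_set_conv_nth)
    have "length (rep x) = length (filter (\<lambda>x. x \<noteq> None) (replicate a None @ track j v))"
      using length_filter_padl track_v[OF j(1)] j(2) by metis
    also have "\<dots> \<le> length v"
      using length_filter_le[of _ "track j v"] by (simp add: track_def)
    finally show "length (rep x) \<le> length v" .
  qed
  have "v = enc (length v) xs"
  proof (rule track_ext[of _ _ k])
    show "v \<in> lists {c. length c = k}"
      using enc_in_lists[of m xs] assms(1,2) by (metis append_in_lists_conv)
    show "\<forall>j<k. track j v = track j (enc (length v) xs)"
    proof (intro allI impI)
      fix j
      assume j: "j < k"
      have "length (rep (xs ! j)) \<le> length v"
        using fits j assms(2) by (simp add: fits_def)
      then have "replicate a None @ track j v = replicate a None @ padl (length v) (rep (xs ! j))"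
        using track_v[OF j] m replicate_None_append_padl[of "rep (xs ! j)" "length v" a] by simp
      then show "track j v = track j (enc (length v) xs)"
        using track_enc j assms(2) fits by simp
    qed
  qed (use assms enc_in_lists in auto)
  with fits show ?thesis by simp
qed

lemma map_butlast_enc: "map butlast (enc m (xs @ [x])) = enc m xs"
  by (simp add: enc_def)

text \<open>Existential quantification over the last coordinate: erase its track, then strip the
  all-padding columns this may leave at the front.\<close>

lemma regular_rel_ex:
  assumes "regular_rel (Suc k) P"
  shows "regular_rel k (\<lambda>xs. \<exists>x. P (xs @ [x]))"
proof -
  let ?z = "replicate k (None :: 'd option)"
  have "rel_lang k (\<lambda>xs. \<exists>x. P (xs @ [x]))
      = {v. \<exists>a. replicate a ?z @ v \<in> map butlast ` rel_lang (Suc k) P}"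
  proof (intro set_eqI iffI)
    fix v
    assume "v \<in> rel_lang k (\<lambda>xs. \<exists>x. P (xs @ [x]))"
    then obtain m xs x where v: "v = enc m xs" "length xs = k" "fits m xs" "P (xs @ [x])"
      by (auto elim!: rel_langE)
    define M where "M = max m (length (rep x))"
    have fits: "fits M (xs @ [x])"
      using v(3) by (auto simp: fits_def M_def)
    then have "enc M (xs @ [x]) \<in> rel_lang (Suc k) P"
      using v by (simp add: enc_in_rel_lang_iff)
    moreover have "map butlast (enc M (xs @ [x])) = replicate (M - m) ?z @ v"
      using replicate_append_enc[OF v(2,3), of "M - m"] v(1) by (simp add: map_butlast_enc M_def)
    ultimately show "v \<in> {v. \<exists>a. replicate a ?z @ v \<in> map butlast ` rel_lang (Suc k) P}"
      by (metis (mono_tags, lifting) image_eqI mem_Collect_eq)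
  next
    fix v
    assume "v \<in> {v. \<exists>a. replicate a ?z @ v \<in> map butlast ` rel_lang (Suc k) P}"
    then obtain a w where a: "replicate a ?z @ v = map butlast w" "w \<in> rel_lang (Suc k) P"
      by blast
    then obtain m ys where w: "w = enc m ys" "length ys = Suc k" "fits m ys" "P ys"
      by (auto elim!: rel_langE)
    obtain xs x where ys: "ys = xs @ [x]"
      using w(2) by (metis length_Suc_conv_rev)
    have xs: "length xs = k" "fits m xs"
      using w(2,3) ys by (auto simp: fits_def)
    have "replicate a ?z @ v = enc m xs"
      using a(1) w(1) ys by (simp add: map_butlast_enc)
    from replicate_append_eq_encD[OF this xs]
    show "v \<in> rel_lang k (\<lambda>xs. \<exists>x. P (xs @ [x]))"
      using xs(1) w(4) ys by (metis enc_in_rel_lang_iff)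
  qed
  then show ?thesis
    using assms unfolding regular_rel_def
    by (simp add: regular_lang_replicate_quotient regular_lang_image_map)
qed

lemma regular_rel_all:
  "regular_rel (Suc k) P \<Longrightarrow> regular_rel k (\<lambda>xs. \<forall>x. P (xs @ [x]))"
  using regular_rel_Not[OF regular_rel_ex[OF regular_rel_Not]] by simp

lemma regular_rel_ex_list:
  assumes "regular_rel (k + j) P"
  shows "regular_rel k (\<lambda>xs. \<exists>ys. length ys = j \<and> P (xs @ ys))"
  using assms
proof (induction j arbitrary: P)
  case (Suc j)
  have "regular_rel (k + j) (\<lambda>zs. \<exists>x. P (zs @ [x]))"
    using regular_rel_ex Suc.prems by simp
  from Suc.IH[OF this]
  show ?case
  proof (rule regular_rel_cong)
    show "(\<exists>ys. length ys = j \<and> (\<exists>x. P ((xs @ ys) @ [x])))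
        \<longleftrightarrow> (\<exists>ys. length ys = Suc j \<and> P (xs @ ys))" for xs
      by (metis append.assoc length_Suc_conv_rev length_append_singleton)
  qed
qed simp

lemma regular_rel_select:
  assumes "regular_rel (length \<sigma>) P" "\<forall>i\<in>set \<sigma>. i < k"
  shows "regular_rel k (\<lambda>xs. P (map (nth xs) \<sigma>))"
proof -
  have "rel_lang k (\<lambda>xs. P (map (nth xs) \<sigma>))
      = rel_lang k (\<lambda>_. True) \<inter> {w. map (\<lambda>c. map (nth c) \<sigma>) w \<in> rel_lang (length \<sigma>) P}"
  proof (rule rel_lang_eqI)
    fix m xs
    assume xs: "length xs = k" "fits m xs"
    moreover have "fits m (map (nth xs) \<sigma>)"
      using xs assms(2) by (auto simp: fits_def)
    moreover have "map (\<lambda>c. map (nth c) \<sigma>) (enc m xs) = enc m (map (nth xs) \<sigma>)"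
      using xs(1) assms(2) by (simp add: enc_def)
    ultimately show "enc m xs \<in> rel_lang k (\<lambda>_. True) \<inter> {w. map (\<lambda>c. map (nth c) \<sigma>) w \<in> rel_lang (length \<sigma>) P}
       \<longleftrightarrow> P (map (nth xs) \<sigma>)"
      by (simp add: enc_in_rel_lang_iff)
  qed auto
  then show ?thesis
    using assms(1) regular_rel_True unfolding regular_rel_def
    by (simp add: regular_lang_Int regular_lang_vimage_map)
qed

lemma regular_rel_select1: "regular_rel 1 P \<Longrightarrow> a < k \<Longrightarrow> regular_rel k (\<lambda>xs. P [xs ! a])"
  using regular_rel_select[of "[a]" P k] by simp

lemma regular_rel_select2:
  "regular_rel 2 P \<Longrightarrow> a < k \<Longrightarrow> b < k \<Longrightarrow> regular_rel k (\<lambda>xs. P [xs ! a, xs ! b])"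
  using regular_rel_select[of "[a, b]" P k] by (simp add: numeral_2_eq_2)

lemma regular_rel_select3:
  "regular_rel 3 P \<Longrightarrow> a < k \<Longrightarrow> b < k \<Longrightarrow> c < k \<Longrightarrow> regular_rel k (\<lambda>xs. P [xs ! a, xs ! b, xs ! c])"
  using regular_rel_select[of "[a, b, c]" P k] by (simp add: numeral_3_eq_3)

definition width :: "nat list \<Rightarrow> nat" where
  "width xs = Max (insert 0 ((length \<circ> rep) ` set xs))"

definition min_enc :: "nat list \<Rightarrow> 'd option list list" where
  "min_enc xs = enc (width xs) xs"

lemma fits_iff_width_le: "fits m xs \<longleftrightarrow> width xs \<le> m"
  by (auto simp: fits_def width_def)

lemma width_Nil: "width [] = 0"
  by (simp add: width_def)

lemma width_Cons: "width (x # xs) = max (length (rep x)) (width xs)"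
  by (simp add: width_def insert_commute[of 0])

lemma width_attained:
  assumes "0 < width xs"
  obtains j where "j < length xs" "length (rep (xs ! j)) = width xs"
proof -
  have "width xs \<in> insert 0 ((length \<circ> rep) ` set xs)"
    unfolding width_def by (rule Max_in) auto
  then obtain x where "x \<in> set xs" "length (rep x) = width xs"
    using assms by auto
  then show ?thesis
    using that by (metis in_set_conv_nth)
qed

lemma enc_eq_replicate_min_enc:
  "fits m xs \<Longrightarrow> enc m xs = replicate (m - width xs) (replicate (length xs) None) @ min_enc xs"
  using replicate_append_enc[of xs "length xs" "width xs" "m - width xs"]
  by (simp add: min_enc_def fits_iff_width_le)

lemma hd_min_enc:
  assumes "min_enc xs \<noteq> []"
  shows "hd (min_enc xs) \<noteq> replicate (length xs) None"
proof -
  have "length (min_enc xs) \<noteq> 0"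
    using assms by simp
  then have "0 < width xs"
    by (simp add: min_enc_def)
  then obtain j where j: "j < length xs" "length (rep (xs ! j)) = width xs"
    by (rule width_attained)
  have "hd (min_enc xs) ! j = padl (width xs) (rep (xs ! j)) ! 0"
    using assms j(1) \<open>0 < width xs\<close> by (simp add: min_enc_def hd_conv_nth nth_enc)
  also have "\<dots> \<noteq> None"
    using j(2) \<open>0 < width xs\<close> by (rule nth0_padl_neq_None)
  finally show ?thesis
    using j(1) by auto
qed

lemma rel_lang_eq_padded_min_enc:
  "rel_lang k P = {replicate a (replicate k None) @ w | a w. w \<in> {min_enc xs | xs. length xs = k \<and> P xs}}"
proof (intro set_eqI iffI)
  fix w
  assume "w \<in> rel_lang k P"
  then obtain m xs where xs: "w = enc m xs" "length xs = k" "fits m xs" "P xs"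
    by (rule rel_langE)
  then have "w = replicate (m - width xs) (replicate k None) @ min_enc xs"
    by (simp add: enc_eq_replicate_min_enc)
  with xs show "w \<in> {replicate a (replicate k None) @ w | a w. w \<in> {min_enc xs | xs. length xs = k \<and> P xs}}"
    by blast
next
  fix w
  assume "w \<in> {replicate a (replicate k None) @ w | a w. w \<in> {min_enc xs | xs. length xs = k \<and> P xs}}"
  then obtain a xs where xs: "w = replicate a (replicate k None) @ min_enc xs" "length xs = k" "P xs"
    by blast
  have fits: "fits (a + width xs) xs"
    by (simp add: fits_iff_width_le)
  then have "w = enc (a + width xs) xs"
    using xs(1,2) by (simp add: enc_eq_replicate_min_enc)
  with fits xs(2,3) show "w \<in> rel_lang k P"
    by (simp add: enc_in_rel_lang_iff)
qed

lemma min_enc_lang_eq: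
  "{min_enc xs | xs. length xs = k \<and> P xs} = rel_lang k P \<inter> {w. w = [] \<or> hd w \<noteq> replicate k None}"
proof (intro set_eqI iffI)
  fix w
  assume "w \<in> {min_enc xs | xs. length xs = k \<and> P xs}"
  then obtain xs where xs: "w = min_enc xs" "length xs = k" "P xs"
    by blast
  then have "w \<in> rel_lang k P"
    by (simp add: min_enc_def enc_in_rel_lang_iff fits_iff_width_le)
  with xs show "w \<in> rel_lang k P \<inter> {w. w = [] \<or> hd w \<noteq> replicate k None}"
    using hd_min_enc by auto
next
  fix w
  assume w: "w \<in> rel_lang k P \<inter> {w. w = [] \<or> hd w \<noteq> replicate k None}"
  then obtain a xs where "w = replicate a (replicate k None) @ min_enc xs" "length xs = k" "P xs"
    by (auto simp: rel_lang_eq_padded_min_enc)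
  moreover from this have "a = 0"
    using w by (cases a) auto
  ultimately show "w \<in> {min_enc xs | xs. length xs = k \<and> P xs}"
    by auto
qed

lemma regular_relI_min_enc:
  assumes "regular_lang {min_enc xs | xs. length xs = k \<and> P xs}"
  shows "regular_rel k P"
  unfolding regular_rel_def rel_lang_eq_padded_min_enc
  by (rule regular_lang_replicate_prefix[OF assms]) (auto dest: hd_min_enc)

lemma regular_rel_min_enc:
  "regular_rel k P \<Longrightarrow> regular_lang {min_enc xs | xs. length xs = k \<and> P xs}"
  unfolding min_enc_lang_eq regular_rel_def by (intro regular_lang_Int regular_lang_hd_neq)

lemma min_enc_in_lists: "min_enc xs \<in> lists {c. length c = length xs}"
  by (simp add: min_enc_def enc_in_lists)

lemma pair_word_eq_min_enc:
  "pair_word (rep x) (rep y) = map (\<lambda>c. (c ! 0, c ! 1)) (min_enc [x, y])"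
proof -
  have "width [x, y] = max (length (rep x)) (length (rep y))"
    by (simp add: width_Cons width_Nil)
  then show ?thesis
    by (intro nth_equalityI) (simp_all add: pair_word_def Let_def min_enc_def nth_enc)
qed

lemma triple_word_eq_min_enc:
  "triple_word (rep x) (rep y) (rep z) = map (\<lambda>c. (c ! 0, c ! 1, c ! 2)) (min_enc [x, y, z])"
proof -
  have "width [x, y, z] = max (length (rep x)) (max (length (rep y)) (length (rep z)))"
    by (simp add: width_Cons width_Nil)
  then show ?thesis
    by (intro nth_equalityI) (simp_all add: triple_word_def Let_def min_enc_def nth_enc)
qed

lemma regular_rel_add: "regular_rel 3 (\<lambda>xs. xs ! 2 = xs ! 0 + xs ! 1)"
proof (rule regular_relI_min_enc)
  let ?list = "\<lambda>(a, b, c). [a, b, c]"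
  have list_triple_word: "map ?list (triple_word (rep x) (rep y) (rep z)) = min_enc [x, y, z]" for x y z
    unfolding triple_word_eq_min_enc map_map
    using min_enc_in_lists[of "[x, y, z]"]
    by (intro map_idI) (auto simp: in_lists_conv_set numeral_3_eq_3 length_Suc_conv)
  have sums: "{triple_word (rep x) (rep y) (rep z) | x y z. z = x + y}
      = range (\<lambda>(x, y). triple_word (rep x) (rep y) (rep (x + y)))"
    by auto
  have "map ?list ` {triple_word (rep x) (rep y) (rep z) | x y z. z = x + y}
      = range (\<lambda>(x, y). min_enc [x, y, x + y])"
    unfolding sums image_image by (intro image_cong refl) (auto simp: list_triple_word)
  also have "\<dots> = {min_enc xs | xs. length xs = 3 \<and> xs ! 2 = xs ! 0 + xs ! 1}"
  proof (intro set_eqI iffI)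
    fix w
    assume "w \<in> {min_enc xs | xs. length xs = 3 \<and> xs ! 2 = xs ! 0 + xs ! 1}"
    then obtain x y where "w = (\<lambda>(x, y). min_enc [x, y, x + y]) (x, y)"
      by (auto simp: numeral_3_eq_3 length_Suc_conv)
    then show "w \<in> range (\<lambda>(x, y). min_enc [x, y, x + y])"
      by (rule image_eqI) simp
  qed force
  finally show "regular_lang {min_enc xs | xs. length xs = 3 \<and> xs ! 2 = xs ! 0 + xs ! 1}"
    using regular_lang_image_map[OF regular_addition, of ?list] by simp
qed

lemma synchronized_if_regular_graph:
  assumes "regular_rel 2 (\<lambda>xs. xs ! 1 = f (xs ! 0))"
  shows "synchronized rep f"
proof -
  have "{min_enc xs | xs. length xs = 2 \<and> xs ! 1 = f (xs ! 0)} = range (\<lambda>n. min_enc [n, f n])"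
    by (auto simp: numeral_2_eq_2 length_Suc_conv)
  then have "{pair_word (rep n) (rep (f n)) | n. True}
      = map (\<lambda>c. (c ! 0, c ! 1)) ` {min_enc xs | xs. length xs = 2 \<and> xs ! 1 = f (xs ! 0)}"
    by (auto simp: pair_word_eq_min_enc)
  then show ?thesis
    unfolding synchronized_def
    using regular_lang_image_map[OF regular_rel_min_enc[OF assms]] by simp
qed

end

section \<open>Relations definable from addition\<close>

lemma set_drop_conv_nth:
  assumes "length vs = h + j"
  shows "set (drop h vs) = (\<lambda>r. vs ! (h + r)) ` {..<j}"
proof (rule set_eqI)
  fix x
  have "x \<in> set (drop h vs) \<longleftrightarrow> (\<exists>r<length (drop h vs). drop h vs ! r = x)"
    by (rule in_set_conv_nth)
  also have "\<dots> \<longleftrightarrow> (\<exists>r<j. vs ! (h + r) = x)"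
    using assms by simp
  finally show "x \<in> set (drop h vs) \<longleftrightarrow> x \<in> (\<lambda>r. vs ! (h + r)) ` {..<j}"
    by auto
qed

context numeration
begin

lemma regular_rel_subst_add:
  assumes "regular_rel (Suc k) P" "a < k" "b < k"
  shows "regular_rel k (\<lambda>xs. P (xs @ [xs ! a + xs ! b]))"
proof -
  have "regular_rel (Suc k) (\<lambda>xs. xs ! k = xs ! a + xs ! b \<and> P xs)"
    using regular_rel_conj[OF regular_rel_select3[OF regular_rel_add, of a "Suc k" b k] assms(1)] assms(2,3)
    by simp
  from regular_rel_ex[OF this] show ?thesis
    by (rule regular_rel_cong) (use assms(2,3) in \<open>auto simp: nth_append\<close>)
qed

lemma regular_rel_le: "regular_rel 2 (\<lambda>xs. xs ! 0 \<le> xs ! 1)"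
proof -
  have "regular_rel (Suc 2) (\<lambda>xs. xs ! 1 = xs ! 0 + xs ! 2)"
    using regular_rel_select3[OF regular_rel_add, of 0 3 2 1] by simp
  from regular_rel_ex[OF this] show ?thesis
    by (rule regular_rel_cong) (auto simp: nth_append le_iff_add)
qed

lemma regular_rel_less: "regular_rel 2 (\<lambda>xs. xs ! 0 < xs ! 1)"
  using regular_rel_Not[OF regular_rel_select2[OF regular_rel_le, of 1 2 0]] by (simp add: not_le)

lemma regular_rel_neq: "regular_rel 2 (\<lambda>xs. xs ! 0 \<noteq> xs ! 1)"
  using regular_rel_disj[OF regular_rel_less regular_rel_select2[OF regular_rel_less, of 1 2 0]]
  by (simp add: nat_neq_iff)

lemma regular_rel_zero: "regular_rel 1 (\<lambda>xs. xs ! 0 = 0)"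
  using regular_rel_select3[OF regular_rel_add, of 0 1 0 0] by simp

lemma regular_rel_pos: "regular_rel 1 (\<lambda>xs. 0 < xs ! 0)"
  using regular_rel_Not[OF regular_rel_zero] by simp

lemma regular_rel_le_add: "regular_rel 3 (\<lambda>xs. xs ! 0 \<le> xs ! 1 + xs ! 2)"
proof -
  have "regular_rel (Suc 3) (\<lambda>xs. xs ! 0 \<le> xs ! 3)"
    using regular_rel_select2[OF regular_rel_le, of 0 4 3] by simp
  from regular_rel_subst_add[OF this, of 1 2] show ?thesis
    by (rule regular_rel_cong) (simp_all add: nth_append)
qed

lemma regular_rel_less_add: "regular_rel 3 (\<lambda>xs. xs ! 0 < xs ! 1 + xs ! 2)"
proof -
  have "regular_rel (Suc 3) (\<lambda>xs. xs ! 0 < xs ! 3)"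
    using regular_rel_select2[OF regular_rel_less, of 0 4 3] by simp
  from regular_rel_subst_add[OF this, of 1 2] show ?thesis
    by (rule regular_rel_cong) (simp_all add: nth_append)
qed

lemma regular_rel_add_le: "regular_rel 3 (\<lambda>xs. xs ! 0 + xs ! 1 \<le> xs ! 2)"
proof -
  have "regular_rel (Suc 3) (\<lambda>xs. xs ! 3 \<le> xs ! 2)"
    using regular_rel_select2[OF regular_rel_le, of 3 4 2] by simp
  from regular_rel_subst_add[OF this, of 0 1] show ?thesis
    by (rule regular_rel_cong) (simp_all add: nth_append)
qed

lemma regular_rel_add_eq: "regular_rel 3 (\<lambda>xs. xs ! 0 + xs ! 1 = xs ! 2)"
  using regular_rel_select3[OF regular_rel_add, of 0 3 1 2] by (simp add: eq_commute)

lemma regular_rel_distinct: "regular_rel (h + j) (\<lambda>vs. distinct (drop h vs))"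
proof -
  have "regular_rel (h + j) (\<lambda>vs. \<forall>a\<in>{..<j}. \<forall>b\<in>{..<j}. a \<noteq> b \<longrightarrow> vs ! (h + a) \<noteq> vs ! (h + b))"
  proof (intro regular_rel_ball_finite ballI)
    fix a b
    assume "a \<in> {..<j}" "b \<in> {..<j}"
    then show "regular_rel (h + j) (\<lambda>vs. a \<noteq> b \<longrightarrow> vs ! (h + a) \<noteq> vs ! (h + b))"
      using regular_rel_select2[OF regular_rel_neq, of "h + a" "h + j" "h + b"] regular_rel_True
      by (cases "a = b") simp_all
  qed auto
  then show ?thesis
    by (rule regular_rel_cong) (auto simp: distinct_conv_nth)
qed

lemma span_set_conv_nth:
  assumes "ks \<noteq> []"
  shows "P (span (set ks)) \<longleftrightarrow>
    (\<exists>a<length ks. \<exists>b<length ks. (\<forall>r<length ks. ks ! b \<le> ks ! r \<and> ks ! r \<le> ks ! a) \<and> P (ks ! a - ks ! b))"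
proof
  assume P: "P (span (set ks))"
  obtain a b where ab: "a < length ks" "ks ! a = Max (set ks)" "b < length ks" "ks ! b = Min (set ks)"
    using assms Max_in[of "set ks"] Min_in[of "set ks"] by (metis finite_set in_set_conv_nth set_empty)
  moreover have "\<forall>r<length ks. ks ! b \<le> ks ! r \<and> ks ! r \<le> ks ! a"
    using ab by simp
  moreover have "P (ks ! a - ks ! b)"
    using P ab assms by (simp add: span_def)
  ultimately show "\<exists>a<length ks. \<exists>b<length ks. (\<forall>r<length ks. ks ! b \<le> ks ! r \<and> ks ! r \<le> ks ! a) \<and> P (ks ! a - ks ! b)"
    by blast
next
  assume "\<exists>a<length ks. \<exists>b<length ks. (\<forall>r<length ks. ks ! b \<le> ks ! r \<and> ks ! r \<le> ks ! a) \<and> P (ks ! a - ks ! b)"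
  then obtain a b where ab: "a < length ks" "b < length ks"
    "\<forall>r<length ks. ks ! b \<le> ks ! r \<and> ks ! r \<le> ks ! a" "P (ks ! a - ks ! b)"
    by blast
  have "Max (set ks) = ks ! a" "Min (set ks) = ks ! b"
    using ab by (auto intro!: Max_eqI Min_eqI simp: in_set_conv_nth)
  then show "P (span (set ks))"
    using ab assms by (simp add: span_def)
qed

text \<open>Any relation \<open>Pr (span S) m\<close> that is regular once \<open>span S\<close> is replaced by a difference
  \<open>y - x\<close> with \<open>x \<le> y\<close> is regular, the span of a list being the difference of a maximal and a
  minimal entry.\<close>

lemma regular_rel_span:
  assumes R: "regular_rel 3 R" "\<And>x m y. x \<le> y \<Longrightarrow> R [x, m, y] \<longleftrightarrow> Pr (y - x) m"
    and empty: "regular_rel 1 (\<lambda>xs. Pr 0 (xs ! 0))"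
    and "i < h"
  shows "regular_rel (h + j) (\<lambda>vs. Pr (span (set (drop h vs))) (vs ! i))"
proof (cases "j = 0")
  case True
  show ?thesis
    by (rule regular_rel_cong[OF regular_rel_select1[OF empty, of i]]) (use True \<open>i < h\<close> in \<open>simp_all add: span_def\<close>)
next
  case False
  let ?extremal = "\<lambda>vs a b. \<forall>r\<in>{..<j}. vs ! (h + b) \<le> vs ! (h + r) \<and> vs ! (h + r) \<le> vs ! (h + a)"
  have le: "regular_rel (h + j) (\<lambda>vs. vs ! (h + p) \<le> vs ! (h + q))" if "p < j" "q < j" for p q
    using regular_rel_select2[OF regular_rel_le, of "h + p" "h + j" "h + q"] that by simp
  have "regular_rel (h + j) (\<lambda>vs. ?extremal vs a b \<and> R [vs ! (h + b), vs ! i, vs ! (h + a)])"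
    if "a < j" "b < j" for a b
    using that \<open>i < h\<close>
    by (intro regular_rel_conj regular_rel_ball_finite ballI regular_rel_select3[OF R(1)])
      (auto intro!: regular_rel_conj le)
  then have "regular_rel (h + j)
      (\<lambda>vs. \<exists>a\<in>{..<j}. \<exists>b\<in>{..<j}. ?extremal vs a b \<and> R [vs ! (h + b), vs ! i, vs ! (h + a)])"
    by (intro regular_rel_bex_finite ballI) auto
  then show ?thesis
  proof (rule regular_rel_cong)
    fix vs :: "nat list"
    assume len: "length vs = h + j"
    define ks where "ks = drop h vs"
    have ks: "length ks = j" "ks \<noteq> []" "\<And>r. ks ! r = vs ! (h + r)"
      using len False by (auto simp: ks_def)
    have "R [vs ! (h + b), vs ! i, vs ! (h + a)] \<longleftrightarrow> Pr (vs ! (h + a) - vs ! (h + b)) (vs ! i)"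
      if "?extremal vs a b" "a < j" for a b
      using that R(2) by simp
    then have "(\<exists>a\<in>{..<j}. \<exists>b\<in>{..<j}. ?extremal vs a b \<and> R [vs ! (h + b), vs ! i, vs ! (h + a)])
        \<longleftrightarrow> (\<exists>a<j. \<exists>b<j. (\<forall>r<j. ks ! b \<le> ks ! r \<and> ks ! r \<le> ks ! a) \<and> Pr (ks ! a - ks ! b) (vs ! i))"
      unfolding ks(3) Ball_def Bex_def lessThan_iff by blast
    also have "\<dots> \<longleftrightarrow> Pr (span (set ks)) (vs ! i)"
      using span_set_conv_nth[OF ks(2), of "\<lambda>x. Pr x (vs ! i)"] by (simp only: ks(1))
    finally show "(\<exists>a\<in>{..<j}. \<exists>b\<in>{..<j}. ?extremal vs a b \<and> R [vs ! (h + b), vs ! i, vs ! (h + a)])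
        \<longleftrightarrow> Pr (span (set (drop h vs))) (vs ! i)"
      by (simp only: ks_def)
  qed
qed

lemma regular_rel_span_eq:
  assumes "i < h"
  shows "regular_rel (h + j) (\<lambda>vs. span (set (drop h vs)) = vs ! i)"
proof (rule regular_rel_span[OF regular_rel_add_eq _ _ assms])
  show "regular_rel 1 (\<lambda>xs. 0 = xs ! 0)"
    by (rule regular_rel_cong[OF regular_rel_zero]) auto
qed auto

lemma regular_rel_span_le:
  assumes "i < h"
  shows "regular_rel (h + j) (\<lambda>vs. span (set (drop h vs)) \<le> vs ! i)"
proof (rule regular_rel_span[OF _ _ _ assms])
  show "regular_rel 3 (\<lambda>xs. xs ! 2 \<le> xs ! 0 + xs ! 1)"
    using regular_rel_select3[OF regular_rel_le_add, of 2 3 0 1] by simp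
  show "regular_rel 1 (\<lambda>xs. 0 \<le> xs ! 0)"
    by (rule regular_rel_cong[OF regular_rel_True]) auto
qed auto

lemma regular_rel_span_ge:
  assumes "i < h"
  shows "regular_rel (h + j) (\<lambda>vs. vs ! i \<le> span (set (drop h vs)))"
proof (rule regular_rel_span[OF regular_rel_add_le _ _ assms])
  show "regular_rel 1 (\<lambda>xs. xs ! 0 \<le> 0)"
    by (rule regular_rel_cong[OF regular_rel_zero]) auto
qed auto

end

section \<open>String attractors of minimum size\<close>

lemma string_attractor_lessThan: "string_attractor w {..<length w}"
proof -
  have "\<exists>p k. k \<in> {..<length w} \<and> p \<le> k \<and> k < p + l \<and> p + l \<le> length w \<and>
      take l (drop p w) = take l (drop i w)" if "0 < l" "i + l \<le> length w" for i l
    using that by (intro exI[of _ i]) auto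
  then show ?thesis
    unfolding string_attractor_def by blast
qed

lemma finite_string_attractor: "string_attractor w S \<Longrightarrow> finite S"
  unfolding string_attractor_def using finite_subset by blast

lemma gamma_attained: "\<exists>S. string_attractor w S \<and> card S = gamma w"
  unfolding gamma_def by (rule LeastI_ex) (use string_attractor_lessThan in blast)

lemma gamma_le_card: "string_attractor w S \<Longrightarrow> gamma w \<le> card S"
  unfolding gamma_def by (rule Least_le) blast

lemma gamma_eq_iff:
  "gamma w = j \<longleftrightarrow>
    (\<exists>S. string_attractor w S \<and> card S = j) \<and> (\<forall>i<j. \<not> (\<exists>S. string_attractor w S \<and> card S = i))"
proof
  assume j: "gamma w = j"
  then show "(\<exists>S. string_attractor w S \<and> card S = j) \<and> (\<forall>i<j. \<not> (\<exists>S. string_attractor w S \<and> card S = i))"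
    using gamma_attained[of w] gamma_le_card[of w] by (auto simp: not_le[symmetric])
next
  assume j: "(\<exists>S. string_attractor w S \<and> card S = j) \<and> (\<forall>i<j. \<not> (\<exists>S. string_attractor w S \<and> card S = i))"
  then have "gamma w \<le> j"
    using gamma_le_card by blast
  moreover have "\<not> gamma w < j"
    using j gamma_attained[of w] by blast
  ultimately show "gamma w = j"
    by simp
qed

definition minimal_attractor_spans :: "'b list \<Rightarrow> nat set" where
  "minimal_attractor_spans w = {span S | S. string_attractor w S \<and> card S = gamma w}"

lemma finite_minimal_attractor_spans: "finite (minimal_attractor_spans w)"
proof (rule finite_subset)
  show "minimal_attractor_spans w \<subseteq> span ` Pow {..<length w}"
    unfolding minimal_attractor_spans_def string_attractor_def by blast
qed simp

lemma minimal_attractor_spans_nonempty: "minimal_attractor_spans w \<noteq> {}"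
  using gamma_attained[of w] unfolding minimal_attractor_spans_def by blast

lemma eq_maxspan_iff:
  "m = maxspan w \<longleftrightarrow> m \<in> minimal_attractor_spans w \<and> (\<forall>x\<in>minimal_attractor_spans w. x \<le> m)"
  unfolding maxspan_def minimal_attractor_spans_def[symmetric]
  by (subst eq_commute) (rule Max_eq_iff[OF finite_minimal_attractor_spans minimal_attractor_spans_nonempty])

lemma eq_minspan_iff:
  "m = minspan w \<longleftrightarrow> m \<in> minimal_attractor_spans w \<and> (\<forall>x\<in>minimal_attractor_spans w. m \<le> x)"
  unfolding minspan_def minimal_attractor_spans_def[symmetric]
  by (subst eq_commute) (rule Min_eq_iff[OF finite_minimal_attractor_spans minimal_attractor_spans_nonempty])

definition same_factor :: "(nat \<Rightarrow> 'b) \<Rightarrow> nat \<Rightarrow> nat \<Rightarrow> nat \<Rightarrow> bool" where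
  "same_factor s p i l \<longleftrightarrow> (\<forall>t<l. s (p + t) = s (i + t))"

definition prefix_attractor :: "(nat \<Rightarrow> 'b) \<Rightarrow> nat \<Rightarrow> nat list \<Rightarrow> bool" where
  "prefix_attractor s n ks \<longleftrightarrow> (\<forall>k\<in>set ks. k < n) \<and>
     (\<forall>i l. 0 < l \<and> i + l \<le> n \<longrightarrow>
        (\<exists>p. (\<exists>k\<in>set ks. p \<le> k \<and> k < p + l) \<and> p + l \<le> n \<and> same_factor s p i l))"

lemma factor_prefix_of_seq_eq_iff:
  assumes "p + l \<le> n" "i + l \<le> n"
  shows "take l (drop p (prefix_of_seq s n)) = take l (drop i (prefix_of_seq s n)) \<longleftrightarrow> same_factor s p i l"
proof -
  have factor: "take l (drop q (prefix_of_seq s n)) = map s [q..<q + l]" if "q + l \<le> n" for q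
    using that by (simp add: prefix_of_seq_def drop_map take_map take_upt)
  have "map s [p..<p + l] = map s [i..<i + l] \<longleftrightarrow> same_factor s p i l"
    by (auto simp: same_factor_def list_eq_iff_nth_eq)
  then show ?thesis
    using assms by (simp add: factor)
qed

lemma string_attractor_prefix_iff:
  "string_attractor (prefix_of_seq s n) (set ks) \<longleftrightarrow> prefix_attractor s n ks"
proof -
  have "(\<exists>p k. k \<in> set ks \<and> p \<le> k \<and> k < p + l \<and> p + l \<le> n \<and>
        take l (drop p (prefix_of_seq s n)) = take l (drop i (prefix_of_seq s n)))
     \<longleftrightarrow> (\<exists>p. (\<exists>k\<in>set ks. p \<le> k \<and> k < p + l) \<and> p + l \<le> n \<and> same_factor s p i l)"
    if "i + l \<le> n" for i l
    using factor_prefix_of_seq_eq_iff[of _ l n i s] that by blast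
  moreover have "length (prefix_of_seq s n) = n"
    by (simp add: prefix_of_seq_def)
  ultimately show ?thesis
    unfolding string_attractor_def prefix_attractor_def by (simp add: subset_eq)
qed

lemma string_attractor_as_list:
  assumes "string_attractor w S"
  obtains ks where "S = set ks" "distinct ks" "length ks = card S"
  using finite_string_attractor[OF assms] that[of "sorted_list_of_set S"] by simp

lemma ex_prefix_attractor_card_iff:
  "(\<exists>S. string_attractor (prefix_of_seq s n) S \<and> card S = j) \<longleftrightarrow>
    (\<exists>ks. length ks = j \<and> distinct ks \<and> prefix_attractor s n ks)"
proof
  assume "\<exists>S. string_attractor (prefix_of_seq s n) S \<and> card S = j"
  then obtain S where S: "string_attractor (prefix_of_seq s n) S" "card S = j"
    by blast
  obtain ks where "S = set ks" "distinct ks" "length ks = card S"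
    using S(1) by (rule string_attractor_as_list)
  with S show "\<exists>ks. length ks = j \<and> distinct ks \<and> prefix_attractor s n ks"
    using string_attractor_prefix_iff by blast
next
  assume "\<exists>ks. length ks = j \<and> distinct ks \<and> prefix_attractor s n ks"
  then obtain ks where "length ks = j" "distinct ks" "prefix_attractor s n ks"
    by blast
  then show "\<exists>S. string_attractor (prefix_of_seq s n) S \<and> card S = j"
    using string_attractor_prefix_iff distinct_card by blast
qed

lemma minimal_attractor_spans_prefix:
  "minimal_attractor_spans (prefix_of_seq s n) =
    {span (set ks) | ks. length ks = gamma (prefix_of_seq s n) \<and> distinct ks \<and> prefix_attractor s n ks}"
proof (intro set_eqI iffI)
  fix x
  assume "x \<in> minimal_attractor_spans (prefix_of_seq s n)"
  then obtain S where S: "x = span S" "string_attractor (prefix_of_seq s n) S"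
    "card S = gamma (prefix_of_seq s n)"
    unfolding minimal_attractor_spans_def by blast
  obtain ks where "S = set ks" "distinct ks" "length ks = card S"
    using S(2) by (rule string_attractor_as_list)
  with S show "x \<in> {span (set ks) | ks. length ks = gamma (prefix_of_seq s n) \<and> distinct ks \<and> prefix_attractor s n ks}"
    using string_attractor_prefix_iff by auto
next
  fix x
  assume "x \<in> {span (set ks) | ks. length ks = gamma (prefix_of_seq s n) \<and> distinct ks \<and> prefix_attractor s n ks}"
  then obtain ks where "x = span (set ks)" "length ks = gamma (prefix_of_seq s n)" "distinct ks"
    "prefix_attractor s n ks"
    by blast
  then show "x \<in> minimal_attractor_spans (prefix_of_seq s n)"
    unfolding minimal_attractor_spans_def using string_attractor_prefix_iff distinct_card by fastforce
qed

lemma finite_range_automatic: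
  fixes rep :: "nat \<Rightarrow> 'd::finite list" and s :: "nat \<Rightarrow> 'b"
  assumes "automatic_wrt rep s"
  shows "finite (range s)"
proof -
  obtain Q q0 and \<delta> :: "nat \<Rightarrow> 'd \<Rightarrow> nat" and \<tau> :: "nat \<Rightarrow> 'b"
    where A: "finite Q" "q0 \<in> Q" "\<forall>q\<in>Q. \<forall>a. \<delta> q a \<in> Q" "\<forall>n. s n = \<tau> (foldl \<delta> q0 (rep n))"
    using assms unfolding automatic_wrt_def by blast
  have "range s \<subseteq> \<tau> ` Q"
    using A foldl_closed[OF A(3,2)] by auto
  then show ?thesis
    using A(1) finite_subset by blast
qed

locale automatic_sequence = numeration rep for rep :: "nat \<Rightarrow> 'd::finite list" +
  fixes s :: "nat \<Rightarrow> 'b"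
  assumes automatic: "automatic_wrt rep s"
begin

text \<open>The DFAO for \<open>s\<close>, run on the first track while ignoring padding, recognizes the
  positions carrying the letter \<open>b\<close>.\<close>

lemma regular_rel_letter: "regular_rel 1 (\<lambda>xs. s (xs ! 0) = b)"
proof -
  obtain Q q0 and \<delta> :: "nat \<Rightarrow> 'd \<Rightarrow> nat" and \<tau>
    where A: "finite Q" "q0 \<in> Q" "\<forall>q\<in>Q. \<forall>a. \<delta> q a \<in> Q" "\<forall>n. s n = \<tau> (foldl \<delta> q0 (rep n))"
    using automatic unfolding automatic_wrt_def by blast
  define \<delta>' where "\<delta>' q c = (case c ! 0 of None \<Rightarrow> q | Some d \<Rightarrow> \<delta> q d)" for q and c :: "'d option list"
  have first_track: "foldl \<delta>' q w = foldl (\<lambda>q x. case x of None \<Rightarrow> q | Some d \<Rightarrow> \<delta> q d) q (track 0 w)" for q w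
    by (simp add: \<delta>'_def[abs_def] track_def foldl_map)
  have "foldl (\<lambda>q x. case x of None \<Rightarrow> q | Some d \<Rightarrow> \<delta> q d) q (replicate a None) = q" for q a
    by (induction a) auto
  then have unpad: "foldl (\<lambda>q x. case x of None \<Rightarrow> q | Some d \<Rightarrow> \<delta> q d) q (padl m u) = foldl \<delta> q u" for q m u
    by (simp add: padl_def foldl_map)
  from first_track unpad have run: "foldl \<delta>' q0 (enc m xs) = foldl \<delta> q0 (rep (xs ! 0))"
    if "length xs = 1" "fits m xs" for m xs
    using that by (simp add: track_enc)
  have "rel_lang 1 (\<lambda>xs. s (xs ! 0) = b) = rel_lang 1 (\<lambda>_. True) \<inter> {w. foldl \<delta>' q0 w \<in> {q. \<tau> q = b}}"
    by (rule rel_lang_eqI) (auto simp: run A(4) enc_in_rel_lang_iff)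
  moreover have "regular_lang {w. foldl \<delta>' q0 w \<in> {q. \<tau> q = b}}"
    by (rule regular_langI[of Q]) (use A in \<open>auto simp: \<delta>'_def split: option.splits\<close>)
  ultimately show ?thesis
    unfolding regular_rel_def using regular_lang_Int regular_rel_True[unfolded regular_rel_def] by metis
qed

lemma regular_rel_same_letter: "regular_rel 2 (\<lambda>xs. s (xs ! 0) = s (xs ! 1))"
proof -
  have "regular_rel 2 (\<lambda>xs. \<exists>b\<in>range s. s (xs ! 0) = b \<and> s (xs ! 1) = b)"
    using finite_range_automatic[OF automatic]
      regular_rel_select1[OF regular_rel_letter, of 0 2] regular_rel_select1[OF regular_rel_letter, of 1 2]
    by (intro regular_rel_bex_finite regular_rel_conj ballI) auto
  then show ?thesis
    by (rule regular_rel_cong) auto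
qed

lemma regular_rel_same_factor: "regular_rel 3 (\<lambda>xs. same_factor s (xs ! 0) (xs ! 1) (xs ! 2))"
proof -
  define shifted where "shifted xs \<longleftrightarrow>
    xs ! 4 = xs ! 0 + xs ! 3 \<and> xs ! 5 = xs ! 1 + xs ! 3 \<and> s (xs ! 4) = s (xs ! 5)" for xs
  have "regular_rel 6 shifted"
    unfolding shifted_def
    using regular_rel_select3[OF regular_rel_add, of 0 6 3 4] regular_rel_select3[OF regular_rel_add, of 1 6 3 5]
      regular_rel_select2[OF regular_rel_same_letter, of 4 6 5]
    by (intro regular_rel_conj) simp_all
  then have "regular_rel 4 (\<lambda>xs. \<exists>ys. length ys = 2 \<and> shifted (xs @ ys))"
    using regular_rel_ex_list[of 4 2 shifted] by simp
  then have "regular_rel 4 (\<lambda>xs. s (xs ! 0 + xs ! 3) = s (xs ! 1 + xs ! 3))"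
  proof (rule regular_rel_cong)
    fix xs :: "nat list"
    assume "length xs = 4"
    then have "shifted (xs @ [a, b]) \<longleftrightarrow> a = xs ! 0 + xs ! 3 \<and> b = xs ! 1 + xs ! 3 \<and> s a = s b" for a b
      by (simp add: shifted_def nth_append)
    then show "(\<exists>ys. length ys = 2 \<and> shifted (xs @ ys)) \<longleftrightarrow> s (xs ! 0 + xs ! 3) = s (xs ! 1 + xs ! 3)"
      by (auto simp: numeral_2_eq_2 length_Suc_conv)
  qed
  then have "regular_rel 4 (\<lambda>xs. xs ! 3 < xs ! 2 \<longrightarrow> s (xs ! 0 + xs ! 3) = s (xs ! 1 + xs ! 3))"
    using regular_rel_select2[OF regular_rel_less, of 3 4 2] by (intro regular_rel_imp) simp_all
  then have "regular_rel 3 (\<lambda>xs. \<forall>t. (xs @ [t]) ! 3 < (xs @ [t]) ! 2 \<longrightarrow>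
      s ((xs @ [t]) ! 0 + (xs @ [t]) ! 3) = s ((xs @ [t]) ! 1 + (xs @ [t]) ! 3))"
    using regular_rel_all[of 3] by simp
  then show ?thesis
    by (rule regular_rel_cong) (auto simp: nth_append same_factor_def)
qed

text \<open>The quantified positions \<open>i\<close>, \<open>l\<close>, \<open>p\<close> of \<^const>\<open>prefix_attractor\<close> are appended after
  the attractor and then projected away in reverse order.\<close>

lemma regular_rel_prefix_attractor:
  assumes "0 < h"
  shows "regular_rel (h + j) (\<lambda>vs. prefix_attractor s (vs ! 0) (drop h vs))"
proof -
  let ?i = "h + j" and ?l = "Suc (h + j)" and ?p = "Suc (Suc (h + j))"
  define covered where "covered vs \<longleftrightarrow>
    (\<exists>r\<in>{..<j}. vs ! ?p \<le> vs ! (h + r) \<and> vs ! (h + r) < vs ! ?p + vs ! ?l) \<and>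
    vs ! ?p + vs ! ?l \<le> vs ! 0 \<and> same_factor s (vs ! ?p) (vs ! ?i) (vs ! ?l)" for vs
  have "regular_rel (Suc ?p) (\<lambda>vs. vs ! ?p \<le> vs ! (h + r) \<and> vs ! (h + r) < vs ! ?p + vs ! ?l)"
    if "r < j" for r
    using regular_rel_select2[OF regular_rel_le, of ?p "Suc ?p" "h + r"]
      regular_rel_select3[OF regular_rel_less_add, of "h + r" "Suc ?p" ?p ?l] that
    by (intro regular_rel_conj) simp_all
  then have "regular_rel (Suc ?p)
      (\<lambda>vs. \<exists>r\<in>{..<j}. vs ! ?p \<le> vs ! (h + r) \<and> vs ! (h + r) < vs ! ?p + vs ! ?l)"
    by (intro regular_rel_bex_finite) auto
  then have "regular_rel (Suc ?p) covered"
    unfolding covered_def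
    using regular_rel_select3[OF regular_rel_add_le, of ?p "Suc ?p" ?l 0]
      regular_rel_select3[OF regular_rel_same_factor, of ?p "Suc ?p" ?i ?l]
    by (intro regular_rel_conj) simp_all
  then have "regular_rel ?p (\<lambda>vs. 0 < vs ! ?l \<and> vs ! ?i + vs ! ?l \<le> vs ! 0 \<longrightarrow> (\<exists>p. covered (vs @ [p])))"
    using regular_rel_select1[OF regular_rel_pos, of ?l ?p] regular_rel_select3[OF regular_rel_add_le, of ?i ?p ?l 0]
    by (intro regular_rel_imp regular_rel_conj regular_rel_ex) simp_all
  from regular_rel_all[OF regular_rel_all[OF this]]
    regular_rel_ball_finite[of "{..<j}" "h + j" "\<lambda>r vs. vs ! (h + r) < vs ! 0"]
  have "regular_rel (h + j) (\<lambda>vs. (\<forall>r\<in>{..<j}. vs ! (h + r) < vs ! 0) \<and>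
      (\<forall>i l. 0 < ((vs @ [i]) @ [l]) ! ?l \<and>
        ((vs @ [i]) @ [l]) ! ?i + ((vs @ [i]) @ [l]) ! ?l \<le> ((vs @ [i]) @ [l]) ! 0 \<longrightarrow>
        (\<exists>p. covered (((vs @ [i]) @ [l]) @ [p]))))"
    using regular_rel_select2[OF regular_rel_less, of _ "h + j" 0] assms
    by (intro regular_rel_conj) auto
  then show ?thesis
    by (rule regular_rel_cong)
      (use assms in \<open>simp add: prefix_attractor_def covered_def set_drop_conv_nth nth_append\<close>)
qed

lemma regular_rel_ex_attractor_card:
  "regular_rel 1 (\<lambda>xs. \<exists>S. string_attractor (prefix_of_seq s (xs ! 0)) S \<and> card S = j)"
proof -
  have "regular_rel (1 + j) (\<lambda>vs. distinct (drop 1 vs) \<and> prefix_attractor s (vs ! 0) (drop 1 vs))"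
    by (intro regular_rel_conj regular_rel_distinct regular_rel_prefix_attractor) simp
  from regular_rel_ex_list[OF this] show ?thesis
    by (rule regular_rel_cong) (auto simp: ex_prefix_attractor_card_iff length_Suc_conv)
qed

lemma regular_rel_gamma_eq: "regular_rel 1 (\<lambda>xs. gamma (prefix_of_seq s (xs ! 0)) = j)"
proof -
  have "regular_rel 1 (\<lambda>xs. (\<exists>S. string_attractor (prefix_of_seq s (xs ! 0)) S \<and> card S = j) \<and>
      (\<forall>i\<in>{..<j}. \<not> (\<exists>S. string_attractor (prefix_of_seq s (xs ! 0)) S \<and> card S = i)))"
    by (intro regular_rel_conj regular_rel_ex_attractor_card regular_rel_ball_finite ballI
        regular_rel_Not) simp
  then show ?thesis
    by (rule regular_rel_cong) (auto simp: gamma_eq_iff)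
qed

text \<open>Since \<open>\<gamma>\<close> is bounded by \<open>c\<close>, the quantifier over the minimum attractors of a prefix
  becomes a finite disjunction over their sizes \<open>j \<le> c\<close>, each a quantifier over \<open>j\<close> positions.\<close>

lemma regular_rel_bex_minimal_attractor_spans:
  assumes bounded: "\<forall>n. gamma (prefix_of_seq s n) \<le> c"
    and Pr: "\<And>j. regular_rel (2 + j) (\<lambda>vs. Pr (span (set (drop 2 vs))) (vs ! 1))"
  shows "regular_rel 2 (\<lambda>xs. \<exists>x\<in>minimal_attractor_spans (prefix_of_seq s (xs ! 0)). Pr x (xs ! 1))"
proof -
  have "regular_rel (2 + j) (\<lambda>vs. distinct (drop 2 vs) \<and> prefix_attractor s (vs ! 0) (drop 2 vs) \<and>
      Pr (span (set (drop 2 vs))) (vs ! 1))" for j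
    by (intro regular_rel_conj regular_rel_distinct regular_rel_prefix_attractor Pr) simp
  from regular_rel_ex_list[OF this]
  have "regular_rel 2 (\<lambda>xs. \<exists>ks. length ks = j \<and> distinct ks \<and> prefix_attractor s (xs ! 0) ks \<and>
      Pr (span (set ks)) (xs ! 1))" for j
    by (rule regular_rel_cong) (auto simp: nth_append)
  with regular_rel_select1[OF regular_rel_gamma_eq, of 0 2]
  have "regular_rel 2 (\<lambda>xs. \<exists>j\<in>{..c}. gamma (prefix_of_seq s (xs ! 0)) = j \<and>
      (\<exists>ks. length ks = j \<and> distinct ks \<and> prefix_attractor s (xs ! 0) ks \<and> Pr (span (set ks)) (xs ! 1)))"
    by (intro regular_rel_bex_finite regular_rel_conj ballI) auto
  then show ?thesis
    by (rule regular_rel_cong) (use bounded in \<open>auto simp: minimal_attractor_spans_prefix\<close>)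
qed

lemma regular_rel_maxspan:
  assumes "\<forall>n. gamma (prefix_of_seq s n) \<le> c"
  shows "regular_rel 2 (\<lambda>xs. xs ! 1 = maxspan (prefix_of_seq s (xs ! 0)))"
proof -
  have "regular_rel 2 (\<lambda>xs. (\<exists>x\<in>minimal_attractor_spans (prefix_of_seq s (xs ! 0)). x = xs ! 1) \<and>
      \<not> (\<exists>x\<in>minimal_attractor_spans (prefix_of_seq s (xs ! 0)). \<not> x \<le> xs ! 1))"
    using assms
    by (intro regular_rel_conj regular_rel_Not regular_rel_bex_minimal_attractor_spans
        regular_rel_span_eq regular_rel_span_le) auto
  then show ?thesis
    by (rule regular_rel_cong) (auto simp: eq_maxspan_iff)
qed

lemma regular_rel_minspan:
  assumes "\<forall>n. gamma (prefix_of_seq s n) \<le> c"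
  shows "regular_rel 2 (\<lambda>xs. xs ! 1 = minspan (prefix_of_seq s (xs ! 0)))"
proof -
  have "regular_rel 2 (\<lambda>xs. (\<exists>x\<in>minimal_attractor_spans (prefix_of_seq s (xs ! 0)). x = xs ! 1) \<and>
      \<not> (\<exists>x\<in>minimal_attractor_spans (prefix_of_seq s (xs ! 0)). \<not> xs ! 1 \<le> x))"
    using assms
    by (intro regular_rel_conj regular_rel_Not regular_rel_bex_minimal_attractor_spans
        regular_rel_span_eq regular_rel_span_ge) auto
  then show ?thesis
    by (rule regular_rel_cong) (auto simp: eq_minspan_iff)
qed

end

theorem theorem9:
  fixes rep :: "nat \<Rightarrow> 'd::finite list" and s :: "nat \<Rightarrow> 'b"
  assumes "regular_numeration rep"
    and "automatic_wrt rep s"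
    and "\<exists>c::nat. \<forall>n. \<exists>S. string_attractor (prefix_of_seq s n) S \<and> card S \<le> c"
  shows "synchronized rep (\<lambda>n. maxspan (prefix_of_seq s n)) \<and>
         synchronized rep (\<lambda>n. minspan (prefix_of_seq s n))"
proof -
  interpret automatic_sequence rep s
    using assms(1,2) unfolding regular_numeration_def by unfold_locales auto
  obtain c where "\<forall>n. \<exists>S. string_attractor (prefix_of_seq s n) S \<and> card S \<le> c"
    using assms(3) by blast
  then have bounded: "\<forall>n. gamma (prefix_of_seq s n) \<le> c"
    using gamma_le_card le_trans by blast
  show ?thesis
    using synchronized_if_regular_graph[OF regular_rel_maxspan[OF bounded]]
      synchronized_if_regular_graph[OF regular_rel_minspan[OF bounded]]
    by simp
qed

end
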